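(* There exists a constant $C>0$ such that for every $b\in(-1,1)$ and $r\in(0,1-|b|)$, \[ \left|\int_{\mathbb{R}^2_+\setminus B_r((b,0))}|\nabla u_b|^2dx-\pi\log\Big(\frac{2-2b^2}{r}\Big)\right|\le C\Big(\frac{|b|r}{1-b^2}+\frac{r^2}{(1-b^2-|b|r)^2}\Big). \] In particular $\lim_{r\searrow0}\big(\int_{\mathbb{R}^2_+\setminus B_r((b,0))}|\nabla u_b|^2dx-\pi\log\frac1r\big)=\pi\log(2-2b^2)$.
   Context: With $S=\{w\in\mathbb{C}:\operatorname{Re}w>0,0<\operatorname{Im}w<\pi\}$, $F(w)=-1/\cosh w$ (conformal bijection $S\to\mathbb{R}^2_+$, the upper half-plane), $u(z)=\frac\pi2-\operatorname{Im}F^{-1}(z)$, and $\Phi_b(z)=\frac{z+b}{1+bz}$, set $u_b=u\circ\Phi_{-b}$ for $b\in(-1,1)$. *)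

theory Defs
  imports "HOL-Analysis.Analysis"
begin

definition S_strip :: "complex set" where
  "S_strip = {w. Re w > 0 \<and> 0 < Im w \<and> Im w < pi}"

text \<open>Upper half-plane R^2_+ (identified with complex numbers with positive imaginary part).\<close>
definition upper_half :: "complex set" where
  "upper_half = {z. Im z > 0}"

text \<open>F(w) = -1/cosh w, a conformal bijection S -> upper half-plane.\<close>
definition F_map :: "complex \<Rightarrow> complex" where
  "F_map w = - 1 / cosh w"

definition u_fun :: "complex \<Rightarrow> real" where
  "u_fun z = pi / 2 - Im (inv_into S_strip F_map z)"

definition Phi :: "real \<Rightarrow> complex \<Rightarrow> complex" where
  "Phi b z = (z + complex_of_real b) / (1 + complex_of_real b * z)"

definition u_b :: "real \<Rightarrow> complex \<Rightarrow> real" where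
  "u_b b = u_fun \<circ> Phi (- b)"

text \<open>|grad f|^2 at z for a real function on R^2 = C (coordinates x = Re, y = Im):
  (d f/dx)^2 + (d f/dy)^2, via the Frechet derivative.\<close>
definition grad_sq :: "(complex \<Rightarrow> real) \<Rightarrow> complex \<Rightarrow> real" where
  "grad_sq f z = (frechet_derivative f (at z) 1)\<^sup>2 + (frechet_derivative f (at z) \<i>)\<^sup>2"

definition energy :: "real \<Rightarrow> real \<Rightarrow> real" where
  "energy b r = (LINT z : upper_half - ball (complex_of_real b) r | lborel. grad_sq (u_b b) z)"

end

theory Submission
  imports Defs "HOL-Complex_Analysis.Complex_Analysis"
begin

text \<open>
  The map \<open>strip_map b = F\<^sup>-\<^sup>1 \<circ> \<Phi>\<^bsub>-b\<^esub>\<close> is a conformal bijection of the upper half-plane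
  onto the half-strip \<open>S\<close>, and \<open>u\<^sub>b = \<pi>/2 - Im (strip_map b)\<close>. Hence \<open>|\<nabla>u\<^sub>b|\<^sup>2\<close> is the
  Jacobian of \<open>strip_map b\<close>, and by the area formula the energy of \<open>u\<^sub>b\<close> outside
  \<open>B\<^sub>r(b)\<close> is the area of the image \<open>{w \<in> S. \<Phi>\<^sub>b (-1 / cosh w) \<notin> B\<^sub>r(b)}\<close>.
  Since \<open>|\<Phi>\<^sub>b z - b| = (1 - b\<^sup>2) |z| / |1 + b z|\<close> and \<open>sinh (Re w) \<le> |cosh w| \<le> cosh (Re w)\<close>,
  this image contains the rectangle \<open>(0, arcosh y\<^sub>1) \<times> (0, \<pi>)\<close> and lies in
  \<open>[0, arsinh y\<^sub>2] \<times> [0, \<pi>]\<close>, where \<open>y\<^sub>1\<^sub>,\<^sub>2 = (1 - b\<^sup>2 \<mp> |b| r) / r\<close>.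
  Both \<open>arcosh y\<close> and \<open>arsinh y\<close> are \<open>ln (2 y) + O(1 / y\<^sup>2)\<close>, which gives the estimate.
\<close>

subsection \<open>Lebesgue measure on the complex plane and the area formula\<close>

definition complex_of_vec2 :: "real^2 \<Rightarrow> complex" where
  "complex_of_vec2 v = Complex (v$1) (v$2)"

definition vec2_of_complex :: "complex \<Rightarrow> real^2" where
  "vec2_of_complex z = vector [Re z, Im z]"

lemma complex_of_vec2_inverse [simp]: "complex_of_vec2 (vec2_of_complex z) = z"
  by (simp add: complex_of_vec2_def vec2_of_complex_def)

lemma vec2_of_complex_inverse [simp]: "vec2_of_complex (complex_of_vec2 v) = v"
  by (simp add: complex_of_vec2_def vec2_of_complex_def vec_eq_iff forall_2)

lemma bounded_linear_complex_of_vec2: "bounded_linear complex_of_vec2"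
  unfolding linear_conv_bounded_linear[symmetric]
  by (rule linearI) (simp_all add: complex_of_vec2_def complex_eq_iff)

lemma bounded_linear_vec2_of_complex: "bounded_linear vec2_of_complex"
  unfolding linear_conv_bounded_linear[symmetric]
  by (rule linearI) (simp_all add: vec2_of_complex_def vec_eq_iff forall_2)

lemma complex_of_vec2_measurable: "complex_of_vec2 \<in> borel_measurable borel"
  by (intro borel_measurable_continuous_onI linear_continuous_on bounded_linear_complex_of_vec2)

lemma lborel_complex_eq_distr: "lborel = distr lborel borel complex_of_vec2"
proof (rule lborel_eqI)
  fix l u :: complex
  assume le: "\<And>i. i \<in> Basis \<Longrightarrow> l \<bullet> i \<le> u \<bullet> i"
  then have "Re l \<le> Re u" "Im l \<le> Im u"
    using le[of 1] le[of \<i>] by (auto simp: Basis_complex_def)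
  then have "\<forall>i\<in>Basis. vec2_of_complex l \<bullet> i \<le> vec2_of_complex u \<bullet> i"
    by (auto simp: Basis_vec_def inner_axis vec2_of_complex_def forall_2)
  moreover have "complex_of_vec2 -` box l u = box (vec2_of_complex l) (vec2_of_complex u)"
    by (auto simp: mem_box_cart in_box_complex_iff complex_of_vec2_def vec2_of_complex_def forall_2)
  moreover have "(\<Prod>i\<in>Basis. (vec2_of_complex u - vec2_of_complex l) \<bullet> i)
      = (\<Prod>i\<in>UNIV. (vec2_of_complex u - vec2_of_complex l) $ i)"
    by (simp add: Basis_vec_def cart_eq_inner_axis axis_eq_axis prod.UNION_disjoint)
  moreover have "\<dots> = (\<Prod>i\<in>Basis. (u - l) \<bullet> i)"
    by (simp add: UNIV_2 vec2_of_complex_def Basis_complex_def)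
  ultimately show "emeasure (distr lborel borel complex_of_vec2) (box l u) = (\<Prod>i\<in>Basis. (u - l) \<bullet> i)"
    by (simp add: emeasure_distr complex_of_vec2_measurable emeasure_lborel_box_eq)
qed simp

lemma vimage_complex_of_vec2: "complex_of_vec2 -` A = vec2_of_complex ` A"
  by (auto simp: image_iff) (metis vec2_of_complex_inverse)

lemma integrable_lborel_complex_iff:
  fixes f :: "complex \<Rightarrow> real"
  assumes "f \<in> borel_measurable borel"
  shows "integrable lborel f \<longleftrightarrow> integrable lborel (\<lambda>v. f (complex_of_vec2 v))"
  by (subst lborel_complex_eq_distr, rule integrable_distr_eq) (use assms complex_of_vec2_measurable in auto)

lemma integral_lborel_complex_eq:
  fixes f :: "complex \<Rightarrow> real"
  assumes "f \<in> borel_measurable borel"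
  shows "integral\<^sup>L lborel f = integral\<^sup>L lborel (\<lambda>v. f (complex_of_vec2 v))"
  by (subst lborel_complex_eq_distr, rule integral_distr) (use assms complex_of_vec2_measurable in auto)

lemma measure_lborel_complex_eq:
  assumes "A \<in> sets borel"
  shows "measure lborel (complex_of_vec2 -` A) = measure lborel A"
proof -
  have "measure lborel A = measure (distr lborel borel complex_of_vec2) A"
    by (simp flip: lborel_complex_eq_distr)
  then show ?thesis
    using assms by (simp add: measure_distr complex_of_vec2_measurable)
qed

lemma det_matrix_complex_mult:
  "det (matrix (\<lambda>h. vec2_of_complex (d * complex_of_vec2 h))) = (cmod d)\<^sup>2"
proof -
  have "complex_of_vec2 (axis 1 1) = 1" "complex_of_vec2 (axis 2 1) = \<i>"
    by (simp_all add: complex_of_vec2_def axis_def complex_eq_iff)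
  then show ?thesis
    by (simp add: det_2 matrix_def vec2_of_complex_def cmod_power2 power2_eq_square
        flip: power2_eq_square)
qed

text \<open>The change of variables theorem of the library is stated for \<open>real^'n\<close>; the
  following lemmas transfer integrals along the isometry \<open>complex_of_vec2\<close>.\<close>

lemma has_field_derivative_in_vec2:
  assumes "(f has_field_derivative d) (at (complex_of_vec2 v))"
  shows "((\<lambda>v. vec2_of_complex (f (complex_of_vec2 v))) has_derivative
           (\<lambda>h. vec2_of_complex (d * complex_of_vec2 h))) (at v within V)"
proof -
  have "((\<lambda>v. f (complex_of_vec2 v)) has_derivative (\<lambda>h. d * complex_of_vec2 h)) (at v within V)"
    using assms bounded_linear_imp_has_derivative[OF bounded_linear_complex_of_vec2]
    by (auto simp: has_field_derivative_def intro: has_derivative_compose)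
  then show ?thesis
    by (rule has_derivative_compose[OF _ bounded_linear_imp_has_derivative[OF bounded_linear_vec2_of_complex]])
qed

lemma has_integral_complex_of_vec2_imp_set_integral:
  fixes h :: "complex \<Rightarrow> real"
  assumes S: "S \<in> sets borel" and h: "continuous_on S h" and nonneg: "\<And>z. z \<in> S \<Longrightarrow> 0 \<le> h z"
    and int: "((\<lambda>v. h (complex_of_vec2 v)) has_integral I) (complex_of_vec2 -` S)"
  shows "set_integrable lborel S h" and "(LINT z:S|lborel. h z) = I"
proof -
  let ?c = complex_of_vec2
  have abs_int: "(\<lambda>v. h (?c v)) absolutely_integrable_on ?c -` S"
    using int nonneg by (subst absolutely_integrable_on_iff_nonneg) (auto simp: has_integral_integrable)
  have meas: "(\<lambda>z. indicator S z *\<^sub>R h z) \<in> borel_measurable borel"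
    by (rule borel_measurable_continuous_on_indicator[OF S h])
  have comp_meas: "(\<lambda>v. indicator S (?c v) *\<^sub>R h (?c v)) \<in> borel_measurable lborel"
    using measurable_compose[OF complex_of_vec2_measurable meas] by (simp add: o_def)
  show "set_integrable lborel S h"
    unfolding set_integrable_def integrable_lborel_complex_iff[OF meas]
    using abs_int integrable_completion[OF comp_meas] by (simp add: set_integrable_def indicator_vimage)
  have "(LINT v:?c -` S|lebesgue. h (?c v)) = I"
    using set_lebesgue_integral_eq_integral(2)[OF abs_int] int by (simp add: integral_unique)
  then show "(LINT z:S|lborel. h z) = I"
    unfolding set_lebesgue_integral_def integral_lborel_complex_eq[OF meas]
    using integral_completion[OF comp_meas] by (simp add: set_lebesgue_integral_def indicator_vimage)
qed

lemma holomorphic_area_formula: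
  fixes f :: "complex \<Rightarrow> complex"
  assumes holo: "f holomorphic_on U" and U: "open U" and inj: "inj_on f U" and "S \<subseteq> U"
    and S: "S \<in> sets borel" and fS: "f ` S \<in> sets borel" and bdd: "bounded (f ` S)"
  shows "set_integrable lborel S (\<lambda>z. (cmod (deriv f z))\<^sup>2)"
    and "(LINT z:S|lborel. (cmod (deriv f z))\<^sup>2) = measure lborel (f ` S)"
proof -
  define c where "c = complex_of_vec2"
  define V where "V = c -` S"
  define g where "g = (\<lambda>v. vec2_of_complex (f (c v)))"
  have c_meas: "c \<in> borel_measurable borel"
    by (simp add: c_def complex_of_vec2_measurable)
  have V: "V \<in> sets lebesgue"
    using measurable_sets_borel[OF c_meas S] by (simp add: V_def)
  have der: "(g has_derivative (\<lambda>h. vec2_of_complex (deriv f (c v) * c h))) (at v within V)"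
    if "v \<in> V" for v
    unfolding g_def c_def
    using holomorphic_derivI[OF holo U] that \<open>S \<subseteq> U\<close>
    by (intro has_field_derivative_in_vec2) (auto simp: V_def c_def)
  have "inj_on g V"
  proof (rule inj_onI)
    fix v w assume "v \<in> V" "w \<in> V" "g v = g w"
    then have "f (c v) = f (c w)" "c v \<in> U" "c w \<in> U"
      using \<open>S \<subseteq> U\<close> by (auto simp: V_def g_def dest: arg_cong[of _ _ complex_of_vec2])
    then have "c v = c w"
      using inj by (simp add: inj_on_eq_iff)
    then show "v = w"
      by (metis c_def vec2_of_complex_inverse)
  qed
  moreover have "g ` V = c -` (f ` S)"
    by (simp add: g_def V_def c_def vimage_complex_of_vec2 image_image)
  moreover have "c -` (f ` S) \<in> lmeasurable"
  proof (rule bounded_set_imp_lmeasurable)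
    show "bounded (c -` (f ` S))"
      unfolding c_def vimage_complex_of_vec2
      by (rule bounded_linear_image[OF bdd bounded_linear_vec2_of_complex])
    show "c -` (f ` S) \<in> sets lebesgue"
      using measurable_sets_borel[OF c_meas fS] by simp
  qed
  ultimately have "((\<lambda>v. (cmod (deriv f (c v)))\<^sup>2) has_integral measure lborel (f ` S)) V"
    using has_measure_differentiable_image[OF V der, of "measure lborel (f ` S)"]
      measure_lborel_complex_eq[OF fS] measurable_sets_borel[OF c_meas fS]
    by (simp add: det_matrix_complex_mult c_def measure_completion)
  moreover have "continuous_on S (\<lambda>z. (cmod (deriv f z))\<^sup>2)"
    using holomorphic_deriv[OF holo U] \<open>S \<subseteq> U\<close>
    by (intro continuous_intros) (auto intro: continuous_on_subset holomorphic_on_imp_continuous_on)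
  ultimately show "set_integrable lborel S (\<lambda>z. (cmod (deriv f z))\<^sup>2)"
    and "(LINT z:S|lborel. (cmod (deriv f z))\<^sup>2) = measure lborel (f ` S)"
    using has_integral_complex_of_vec2_imp_set_integral[OF S] by (auto simp: V_def c_def)
qed

subsection \<open>The conformal map \<open>F\<close> from the half-strip onto the upper half-plane\<close>

lemma Re_cosh: "Re (cosh z) = cosh (Re z) * cos (Im z)"
  by (simp add: cosh_def Re_exp Im_exp field_simps)

lemma Im_cosh: "Im (cosh z) = sinh (Re z) * sin (Im z)"
  by (simp add: sinh_def cosh_def Re_exp Im_exp field_simps)

lemma norm_cosh_bounds: "\<bar>sinh (Re z)\<bar> \<le> cmod (cosh z)" "cmod (cosh z) \<le> cosh (Re z)"
proof -
  have "(cmod (cosh z))\<^sup>2 = (cosh (Re z) * cos (Im z))\<^sup>2 + (sinh (Re z) * sin (Im z))\<^sup>2"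
    by (simp add: cmod_power2 Re_cosh Im_cosh)
  also have "\<dots> = (sinh (Re z))\<^sup>2 + (cos (Im z))\<^sup>2"
  proof -
    have "(sin (Im z))\<^sup>2 * (sinh (Re z))\<^sup>2 + (cos (Im z))\<^sup>2 * (sinh (Re z))\<^sup>2 = (sinh (Re z))\<^sup>2"
      by (simp flip: distrib_right)
    then show ?thesis
      by (simp add: cosh_square_eq power_mult_distrib algebra_simps)
  qed
  finally have norm_sq: "(cmod (cosh z))\<^sup>2 = (sinh (Re z))\<^sup>2 + (cos (Im z))\<^sup>2" .
  have "(cos (Im z))\<^sup>2 \<le> 1"
    by (simp add: abs_square_le_1)
  then have "(sinh (Re z))\<^sup>2 \<le> (cmod (cosh z))\<^sup>2" "(cmod (cosh z))\<^sup>2 \<le> (cosh (Re z))\<^sup>2"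
    by (simp_all add: norm_sq cosh_square_eq)
  then show "\<bar>sinh (Re z)\<bar> \<le> cmod (cosh z)" "cmod (cosh z) \<le> cosh (Re z)"
    using cosh_real_pos[of "Re z"] by (auto intro: abs_le_square_iff[THEN iffD1] power2_le_imp_le)
qed

lemma Im_cosh_strip_pos: "w \<in> S_strip \<Longrightarrow> Im (cosh w) > 0"
  unfolding S_strip_def Im_cosh by (auto intro!: mult_pos_pos sin_gt_zero)

lemma inj_on_cosh_strip: "inj_on cosh S_strip"
proof (rule inj_onI)
  fix v w assume v: "v \<in> S_strip" and w: "w \<in> S_strip" and "cosh v = cosh w"
  then have "cos (\<i> * v) = cos (\<i> * w)"
    by (simp add: cosh_conv_cos)
  then obtain n where "n \<in> \<int>"
    and "\<i> * v = \<i> * w + of_real (2 * n * pi) \<or> \<i> * v = - (\<i> * w) + of_real (2 * n * pi)"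
    unfolding complex_cos_eq by blast
  then have re: "Re v = Re w" and im: "Im w - Im v = 2 * n * pi"
    using v w by (auto simp: complex_eq_iff S_strip_def)
  have "\<bar>Im w - Im v\<bar> < pi"
    using v w unfolding S_strip_def by (auto simp: abs_less_iff)
  then have "\<bar>2 * n * pi\<bar> < 1 * pi"
    by (simp add: im)
  then have "\<bar>n\<bar> < 1"
    by (simp add: abs_mult)
  with \<open>n \<in> \<int>\<close> have "n = 0"
    by (auto elim: Ints_cases)
  then show "v = w"
    using re im by (simp add: complex_eq_iff)
qed

lemma cosh_strip_surj:
  assumes "Im c > 0"
  shows "\<exists>w\<in>S_strip. cosh w = c"
proof -
  obtain v where v: "cos v = c" "0 \<le> Re v" "Re v \<le> pi"
  proof (cases "0 \<le> Re (Arccos c)")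
    case True
    then show ?thesis
      using that[of "Arccos c"] Re_Arccos_bounds[of c] by simp
  next
    case False
    then show ?thesis
      using that[of "- Arccos c"] Re_Arccos_bounds[of c] by simp
  qed
  have sign: "sin (Re v) * (exp (- Im v) - exp (Im v)) > 0"
    using assms Im_cos[of v] v(1) by simp
  then have "Re v \<noteq> 0" "Re v \<noteq> pi"
    by auto
  then have "sin (Re v) > 0"
    using v by (intro sin_gt_zero) auto
  then have "Im v < 0"
    using sign by (simp add: zero_less_mult_iff)
  moreover have "cosh (\<i> * v) = c"
    using v(1) cos_conv_cosh[of "- v"] by simp
  moreover have "0 < Re v" "Re v < pi"
    using v \<open>Re v \<noteq> 0\<close> \<open>Re v \<noteq> pi\<close> by auto
  ultimately show ?thesis
    by (intro bexI[of _ "\<i> * v"]) (auto simp: S_strip_def)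
qed

lemma F_map_image: "F_map ` S_strip = upper_half"
proof (intro equalityI subsetI)
  fix z assume "z \<in> F_map ` S_strip"
  then obtain w where "w \<in> S_strip" "z = F_map w"
    by blast
  then show "z \<in> upper_half"
    using Im_cosh_strip_pos[of w]
    by (auto simp: upper_half_def F_map_def Im_divide cmod_power2[symmetric] intro!: divide_pos_pos)
next
  fix z assume z: "z \<in> upper_half"
  then have "z \<noteq> 0" "Im (- 1 / z) > 0"
    by (auto simp: upper_half_def Im_divide cmod_power2[symmetric] intro!: divide_pos_pos)
  then obtain w where "w \<in> S_strip" "cosh w = - 1 / z"
    using cosh_strip_surj by blast
  then show "z \<in> F_map ` S_strip"
    using \<open>z \<noteq> 0\<close> by (auto simp: F_map_def image_iff intro!: bexI[of _ w])
qed

lemma norm_F_map: "cmod (F_map w) = 1 / cmod (cosh w)"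
  by (simp add: F_map_def norm_divide)

lemma inj_on_F_map: "inj_on F_map S_strip"
  using inj_on_cosh_strip by (auto simp: inj_on_def F_map_def)

lemma F_map_holomorphic: "F_map holomorphic_on S_strip"
proof -
  have "(\<lambda>w. - 1 / cosh w) analytic_on S_strip"
    using Im_cosh_strip_pos by (intro analytic_intros) force
  then show ?thesis
    unfolding F_map_def[abs_def] by (rule analytic_imp_holomorphic)
qed

lemma open_S_strip: "open S_strip"
  unfolding S_strip_def
  by (intro open_Collect_conj open_halfspace_Re_gt open_halfspace_Im_gt open_halfspace_Im_lt)

lemma open_upper_half: "open upper_half"
  unfolding upper_half_def by (rule open_halfspace_Im_gt)

lemma inv_F_map_holomorphic: "inv_into S_strip F_map holomorphic_on upper_half"
proof -
  obtain g where g: "g holomorphic_on F_map ` S_strip" "\<And>w. w \<in> S_strip \<Longrightarrow> g (F_map w) = w"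
    using holomorphic_has_inverse[OF F_map_holomorphic open_S_strip inj_on_F_map] by metis
  have "g z = inv_into S_strip F_map z" if "z \<in> F_map ` S_strip" for z
    using that g(2) inj_on_F_map by (auto simp: inv_into_f_f)
  then show ?thesis
    using holomorphic_transform g(1) F_map_image by metis
qed

subsection \<open>Moebius maps of the upper half-plane\<close>

lemma Phi_denom_nonzero:
  assumes "\<bar>c\<bar> < 1" "z \<in> upper_half"
  shows "1 + complex_of_real c * z \<noteq> 0"
proof
  assume "1 + complex_of_real c * z = 0"
  then have "c * Im z = 0" "1 + c * Re z = 0"
    by (simp_all add: complex_eq_iff)
  then show False
    using assms by (auto simp: upper_half_def)
qed

lemma Im_Phi: "Im (Phi c z) = (1 - c\<^sup>2) * Im z / (cmod (1 + complex_of_real c * z))\<^sup>2"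
proof -
  have "Im (Phi c z) = (Im (z + c) * Re (1 + c * z) - Re (z + c) * Im (1 + c * z))
      / ((Re (1 + c * z))\<^sup>2 + (Im (1 + c * z))\<^sup>2)"
    unfolding Phi_def by (simp only: Im_divide)
  also have "(Re (1 + c * z))\<^sup>2 + (Im (1 + c * z))\<^sup>2 = (cmod (1 + complex_of_real c * z))\<^sup>2"
    by (simp only: cmod_power2)
  also have "Im (z + c) * Re (1 + c * z) - Re (z + c) * Im (1 + c * z) = (1 - c\<^sup>2) * Im z"
    by (simp add: algebra_simps power2_eq_square)
  finally show ?thesis .
qed

lemma Phi_in_upper_half:
  assumes "\<bar>c\<bar> < 1" "z \<in> upper_half"
  shows "Phi c z \<in> upper_half"
  using assms Phi_denom_nonzero[OF assms] abs_square_less_1[of c]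
  by (auto simp: upper_half_def Im_Phi intro!: divide_pos_pos mult_pos_pos)

lemma Phi_inverse:
  assumes "\<bar>c\<bar> < 1" "z \<in> upper_half"
  shows "Phi (- c) (Phi c z) = z"
proof -
  define w where "w = Phi c z"
  have den: "1 + complex_of_real c * z \<noteq> 0"
    by (rule Phi_denom_nonzero[OF assms])
  have "1 - (complex_of_real c)\<^sup>2 \<noteq> 0"
    using assms(1) by (metis abs_square_eq_1 less_irrefl of_real_1 of_real_eq_iff of_real_power right_minus_eq)
  moreover have w: "w * (1 + c * z) = z + c"
    using den by (simp add: w_def Phi_def)
  then have "(w - c) * (1 + c * z) = z * (1 - (complex_of_real c)\<^sup>2)"
    by (simp add: algebra_simps power2_eq_square)
  moreover have "(1 - c * w) * (1 + c * z) = 1 - (complex_of_real c)\<^sup>2"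
  proof -
    have "(1 - c * w) * (1 + c * z) = (1 + c * z) - c * (w * (1 + c * z))"
      by (simp add: algebra_simps)
    then show ?thesis
      unfolding w by (simp add: algebra_simps power2_eq_square)
  qed
  ultimately have "((w - c) * (1 + c * z)) / ((1 - c * w) * (1 + c * z)) = z"
    by simp
  then show ?thesis
    unfolding w_def[symmetric] using den by (simp add: Phi_def)
qed

lemma Phi_holomorphic: "\<bar>c\<bar> < 1 \<Longrightarrow> Phi c holomorphic_on upper_half"
  unfolding Phi_def[abs_def] using Phi_denom_nonzero by (intro holomorphic_intros) auto

lemma Phi_notin_ball_iff:
  assumes "\<bar>b\<bar> < 1" "z \<in> upper_half"
  shows "Phi b z \<notin> ball (complex_of_real b) r \<longleftrightarrow> r * cmod (1 + complex_of_real b * z) \<le> cmod z * (1 - b\<^sup>2)"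
proof -
  have den: "1 + complex_of_real b * z \<noteq> 0"
    by (rule Phi_denom_nonzero[OF assms])
  have "Phi b z - b = z * of_real (1 - b\<^sup>2) / (1 + complex_of_real b * z)"
    using den by (simp add: Phi_def field_simps power2_eq_square)
  then have "cmod (Phi b z - b) = cmod z * \<bar>1 - b\<^sup>2\<bar> / cmod (1 + complex_of_real b * z)"
    by (simp only: norm_mult norm_divide norm_of_real)
  moreover have "\<bar>1 - b\<^sup>2\<bar> = 1 - b\<^sup>2"
    using assms(1) abs_square_less_1[of b] by simp
  ultimately have "dist (complex_of_real b) (Phi b z) = cmod z * (1 - b\<^sup>2) / cmod (1 + complex_of_real b * z)"
    by (simp add: dist_norm norm_minus_commute)
  then show ?thesis
    using den by (simp add: not_less pos_le_divide_eq)
qed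

lemma Phi_notin_ball_if_norm_ge:
  assumes "\<bar>b\<bar> < 1" "z \<in> upper_half" "0 \<le> r" "r \<le> cmod z * (1 - b\<^sup>2 - \<bar>b\<bar> * r)"
  shows "Phi b z \<notin> ball (complex_of_real b) r"
proof -
  have "cmod (1 + complex_of_real b * z) \<le> 1 + \<bar>b\<bar> * cmod z"
    using norm_triangle_ineq[of 1 "complex_of_real b * z"] by (simp add: norm_mult)
  then have "r * cmod (1 + complex_of_real b * z) \<le> r * (1 + \<bar>b\<bar> * cmod z)"
    using assms(3) by (rule mult_left_mono)
  moreover have "r * (1 + \<bar>b\<bar> * cmod z) \<le> cmod z * (1 - b\<^sup>2)"
    using assms(4) by (simp add: algebra_simps)
  ultimately show ?thesis
    unfolding Phi_notin_ball_iff[OF assms(1,2)] by linarith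
qed

lemma norm_ge_if_Phi_notin_ball:
  assumes "\<bar>b\<bar> < 1" "z \<in> upper_half" "0 \<le> r" "Phi b z \<notin> ball (complex_of_real b) r"
  shows "r \<le> cmod z * (1 - b\<^sup>2 + \<bar>b\<bar> * r)"
proof -
  have "1 - \<bar>b\<bar> * cmod z \<le> cmod (1 + complex_of_real b * z)"
    using norm_diff_ineq[of 1 "complex_of_real b * z"] by (simp add: norm_mult)
  then have "r * (1 - \<bar>b\<bar> * cmod z) \<le> r * cmod (1 + complex_of_real b * z)"
    using assms(3) by (rule mult_left_mono)
  moreover have "r * cmod (1 + complex_of_real b * z) \<le> cmod z * (1 - b\<^sup>2)"
    using assms(4) Phi_notin_ball_iff[OF assms(1,2)] by blast
  ultimately show ?thesis
    by (simp add: algebra_simps)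
qed

subsection \<open>The energy as an area\<close>

definition strip_map :: "real \<Rightarrow> complex \<Rightarrow> complex" where
  "strip_map b = inv_into S_strip F_map \<circ> Phi (- b)"

lemma u_b_eq_strip_map: "u_b b z = pi / 2 - Im (strip_map b z)"
  by (simp add: u_b_def u_fun_def strip_map_def)

lemma strip_map_holomorphic: "\<bar>b\<bar> < 1 \<Longrightarrow> strip_map b holomorphic_on upper_half"
  unfolding strip_map_def
  by (rule holomorphic_on_compose_gen[OF Phi_holomorphic inv_F_map_holomorphic])
    (auto intro: Phi_in_upper_half)

lemma strip_map_in_strip: "\<bar>b\<bar> < 1 \<Longrightarrow> z \<in> upper_half \<Longrightarrow> strip_map b z \<in> S_strip"
  unfolding strip_map_def using Phi_in_upper_half[of "- b" z] F_map_image
  by (metis abs_minus_cancel comp_apply inv_into_into)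

lemma F_map_strip_map: "\<bar>b\<bar> < 1 \<Longrightarrow> z \<in> upper_half \<Longrightarrow> F_map (strip_map b z) = Phi (- b) z"
  unfolding strip_map_def using Phi_in_upper_half[of "- b" z] F_map_image
  by (metis abs_minus_cancel comp_apply f_inv_into_f)

lemma inj_on_strip_map: "\<bar>b\<bar> < 1 \<Longrightarrow> inj_on (strip_map b) upper_half"
  using F_map_strip_map Phi_inverse[of "- b"] by (intro inj_onI) (metis abs_minus_cancel minus_minus)

lemma strip_map_image:
  assumes "\<bar>b\<bar> < 1"
  shows "strip_map b ` (upper_half - A) = {w \<in> S_strip. Phi b (F_map w) \<notin> A}"
proof (intro equalityI subsetI)
  fix w assume "w \<in> strip_map b ` (upper_half - A)"
  then obtain z where z: "z \<in> upper_half" "z \<notin> A" and w: "w = strip_map b z"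
    by blast
  have "Phi b (F_map w) = z"
    using F_map_strip_map[OF assms z(1)] Phi_inverse[of "- b" z] assms z(1) by (simp add: w)
  then show "w \<in> {w \<in> S_strip. Phi b (F_map w) \<notin> A}"
    using strip_map_in_strip[OF assms z(1)] z(2) by (simp add: w)
next
  fix w assume "w \<in> {w \<in> S_strip. Phi b (F_map w) \<notin> A}"
  then have w: "w \<in> S_strip" "Phi b (F_map w) \<notin> A"
    by simp_all
  have "F_map w \<in> upper_half"
    using w(1) F_map_image by blast
  then have "Phi b (F_map w) \<in> upper_half" "strip_map b (Phi b (F_map w)) = w"
    using assms w(1) inj_on_F_map by (simp_all add: Phi_in_upper_half strip_map_def Phi_inverse)
  then show "w \<in> strip_map b ` (upper_half - A)"
    using w(2) by (metis DiffI image_eqI)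
qed

lemma strip_map_image_borel:
  assumes "\<bar>b\<bar> < 1"
  shows "strip_map b ` (upper_half - ball (complex_of_real b) r) \<in> sets borel"
proof -
  define g where "g = Phi b \<circ> F_map"
  have "continuous_on S_strip g"
    unfolding g_def using F_map_image
    by (intro continuous_on_compose holomorphic_on_imp_continuous_on F_map_holomorphic)
      (auto intro: continuous_on_subset holomorphic_on_imp_continuous_on Phi_holomorphic[OF assms])
  then have "open (S_strip \<inter> g -` ball (complex_of_real b) r)"
    by (intro continuous_open_preimage open_S_strip open_ball)
  moreover have "strip_map b ` (upper_half - ball (complex_of_real b) r)
      = S_strip - (S_strip \<inter> g -` ball (complex_of_real b) r)"
    by (auto simp: strip_map_image[OF assms] g_def)
  ultimately show ?thesis
    using open_S_strip by (simp add: sets.Diff borel_open)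
qed

lemma grad_sq_u_b:
  assumes "\<bar>b\<bar> < 1" "z \<in> upper_half"
  shows "grad_sq (u_b b) z = (cmod (deriv (strip_map b) z))\<^sup>2"
proof -
  define d where "d = deriv (strip_map b) z"
  have "(strip_map b has_derivative (*) d) (at z)"
    using holomorphic_derivI[OF strip_map_holomorphic[OF assms(1)] open_upper_half assms(2)]
    by (simp add: d_def has_field_derivative_def)
  then have "(u_b b has_derivative (\<lambda>h. 0 - Im (d * h))) (at z)"
    unfolding u_b_eq_strip_map[abs_def] by (intro derivative_intros)
  then show ?thesis
    by (simp add: grad_sq_def frechet_derivative_at[symmetric] d_def cmod_power2)
qed

lemma small_radius_bounds:
  fixes b r :: real
  assumes "\<bar>b\<bar> < 1" "0 \<le> r" "r \<le> 1 - \<bar>b\<bar>"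
  shows "r \<le> 1 - b\<^sup>2 - \<bar>b\<bar> * r" and "2 * (\<bar>b\<bar> * r) \<le> 1 - b\<^sup>2"
proof -
  have "r * (1 + \<bar>b\<bar>) \<le> (1 - \<bar>b\<bar>) * (1 + \<bar>b\<bar>)" "\<bar>b\<bar> * r \<le> \<bar>b\<bar> * (1 - \<bar>b\<bar>)"
    "2 * \<bar>b\<bar> * (1 - \<bar>b\<bar>) \<le> (1 + \<bar>b\<bar>) * (1 - \<bar>b\<bar>)"
    using assms by (simp_all add: mult_left_mono mult_right_mono)
  then show "r \<le> 1 - b\<^sup>2 - \<bar>b\<bar> * r" and "2 * (\<bar>b\<bar> * r) \<le> 1 - b\<^sup>2"
    by (simp_all add: power2_eq_square abs_mult_self_eq algebra_simps)
qed

lemma box_subset_strip_map_image: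
  assumes b: "\<bar>b\<bar> < 1" and r: "0 < r" "r \<le> 1 - \<bar>b\<bar>"
  shows "box 0 (Complex (arcosh ((1 - b\<^sup>2 - \<bar>b\<bar> * r) / r)) pi)
           \<subseteq> strip_map b ` (upper_half - ball (complex_of_real b) r)"
proof
  have y_ge_1: "1 \<le> (1 - b\<^sup>2 - \<bar>b\<bar> * r) / r"
    using small_radius_bounds(1)[OF b less_imp_le[OF r(1)] r(2)] r by simp
  fix w assume "w \<in> box 0 (Complex (arcosh ((1 - b\<^sup>2 - \<bar>b\<bar> * r) / r)) pi)"
  then have w: "0 < Re w" "Re w < arcosh ((1 - b\<^sup>2 - \<bar>b\<bar> * r) / r)" "w \<in> S_strip"
    by (auto simp: in_box_complex_iff S_strip_def)
  have "cosh (Re w) < (1 - b\<^sup>2 - \<bar>b\<bar> * r) / r"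
    using w y_ge_1 cosh_real_strict_mono[OF less_imp_le[OF w(1)] w(2)] by simp
  then have "r * cosh (Re w) < 1 - b\<^sup>2 - \<bar>b\<bar> * r"
    using r by (simp add: field_simps)
  moreover have "r * cmod (cosh w) \<le> r * cosh (Re w)"
    using norm_cosh_bounds(2)[of w] r by (simp add: mult_left_mono)
  ultimately have "r * cmod (cosh w) < 1 - b\<^sup>2 - \<bar>b\<bar> * r"
    by linarith
  moreover have "cosh w \<noteq> 0"
    using Im_cosh_strip_pos[OF w(3)] by auto
  ultimately have "r \<le> cmod (F_map w) * (1 - b\<^sup>2 - \<bar>b\<bar> * r)"
    by (simp add: norm_F_map field_simps)
  then have "Phi b (F_map w) \<notin> ball (complex_of_real b) r"
    using w(3) F_map_image r by (intro Phi_notin_ball_if_norm_ge b) auto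
  then show "w \<in> strip_map b ` (upper_half - ball (complex_of_real b) r)"
    using w(3) by (simp add: strip_map_image[OF b])
qed

lemma strip_map_image_subset_cbox:
  assumes b: "\<bar>b\<bar> < 1" and r: "0 < r"
  shows "strip_map b ` (upper_half - ball (complex_of_real b) r)
           \<subseteq> cbox 0 (Complex (arsinh ((1 - b\<^sup>2 + \<bar>b\<bar> * r) / r)) pi)"
proof
  fix w assume "w \<in> strip_map b ` (upper_half - ball (complex_of_real b) r)"
  then have w: "w \<in> S_strip" "Phi b (F_map w) \<notin> ball (complex_of_real b) r"
    by (simp_all add: strip_map_image[OF b])
  have "cosh w \<noteq> 0"
    using Im_cosh_strip_pos[OF w(1)] by auto
  moreover have "r \<le> cmod (F_map w) * (1 - b\<^sup>2 + \<bar>b\<bar> * r)"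
    using w F_map_image r by (intro norm_ge_if_Phi_notin_ball b) auto
  ultimately have "cmod (cosh w) \<le> (1 - b\<^sup>2 + \<bar>b\<bar> * r) / r"
    using r by (simp add: norm_F_map field_simps)
  then have "sinh (Re w) \<le> sinh (arsinh ((1 - b\<^sup>2 + \<bar>b\<bar> * r) / r))"
    using norm_cosh_bounds(1)[of w] by simp
  then show "w \<in> cbox 0 (Complex (arsinh ((1 - b\<^sup>2 + \<bar>b\<bar> * r) / r)) pi)"
    using w(1) by (auto simp: in_cbox_complex_iff S_strip_def simp del: sinh_arsinh_real)
qed

lemma energy_eq_area:
  assumes b: "\<bar>b\<bar> < 1" and r: "0 < r" "r \<le> 1 - \<bar>b\<bar>"
  shows "set_integrable lborel (upper_half - ball (complex_of_real b) r) (grad_sq (u_b b))"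
    and "energy b r = measure lborel (strip_map b ` (upper_half - ball (complex_of_real b) r))"
proof -
  let ?D = "upper_half - ball (complex_of_real b) r"
  have D: "?D \<in> sets borel"
    using open_upper_half by (intro sets.Diff borel_open) auto
  have "bounded (strip_map b ` ?D)"
    by (rule bounded_subset[OF bounded_cbox strip_map_image_subset_cbox[OF b r(1)]])
  note area = holomorphic_area_formula[OF strip_map_holomorphic[OF b] open_upper_half
      inj_on_strip_map[OF b] Diff_subset D strip_map_image_borel[OF b] this]
  have grad: "grad_sq (u_b b) z = (cmod (deriv (strip_map b) z))\<^sup>2" if "z \<in> ?D" for z
    using that grad_sq_u_b[OF b] by blast
  show "set_integrable lborel ?D (grad_sq (u_b b))"
    using area(1) by (subst set_integrable_cong[OF refl refl grad])
  have "energy b r = (LINT z:?D|lborel. (cmod (deriv (strip_map b) z))\<^sup>2)"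
    unfolding energy_def using D grad by (intro set_lebesgue_integral_cong) simp_all
  with area(2) show "energy b r = measure lborel (strip_map b ` ?D)"
    by simp
qed

lemma measure_box_strip: "0 \<le> x \<Longrightarrow> measure lborel (box 0 (Complex x pi)) = x * pi"
  and measure_cbox_strip: "0 \<le> x \<Longrightarrow> measure lborel (cbox 0 (Complex x pi)) = x * pi"
  by (simp_all add: measure_lborel_box_eq measure_lborel_cbox_eq Basis_complex_def)

lemma energy_bounds:
  assumes b: "\<bar>b\<bar> < 1" and r: "0 < r" "r \<le> 1 - \<bar>b\<bar>"
  shows "pi * arcosh ((1 - b\<^sup>2 - \<bar>b\<bar> * r) / r) \<le> energy b r"
    and "energy b r \<le> pi * arsinh ((1 - b\<^sup>2 + \<bar>b\<bar> * r) / r)"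
proof -
  let ?A = "strip_map b ` (upper_half - ball (complex_of_real b) r)"
  have "1 \<le> (1 - b\<^sup>2 - \<bar>b\<bar> * r) / r"
    using small_radius_bounds(1)[OF b less_imp_le[OF r(1)] r(2)] r by simp
  then have "0 \<le> arcosh ((1 - b\<^sup>2 - \<bar>b\<bar> * r) / r)"
    by simp
  moreover have "0 < (1 - b\<^sup>2 + \<bar>b\<bar> * r) / r"
    using b r by (intro divide_pos_pos add_pos_nonneg) (simp_all add: abs_square_less_1)
  then have "0 \<le> arsinh ((1 - b\<^sup>2 + \<bar>b\<bar> * r) / r)"
    by (metis arsinh_real_pos_iff less_imp_le)
  moreover have A: "?A \<in> fmeasurable lborel"
    by (rule fmeasurableI2[OF fmeasurable_cbox strip_map_image_subset_cbox[OF b r(1)]])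
      (metis sets_lborel strip_map_image_borel[OF b])
  have "measure lborel (box 0 (Complex (arcosh ((1 - b\<^sup>2 - \<bar>b\<bar> * r) / r)) pi)) \<le> measure lborel ?A"
    by (rule measure_mono_fmeasurable[OF box_subset_strip_map_image[OF b r] _ A]) simp
  moreover have "measure lborel ?A \<le> measure lborel (cbox 0 (Complex (arsinh ((1 - b\<^sup>2 + \<bar>b\<bar> * r) / r)) pi))"
    by (rule measure_mono_fmeasurable[OF strip_map_image_subset_cbox[OF b r(1)] _ fmeasurable_cbox])
      (metis sets_lborel strip_map_image_borel[OF b])
  ultimately show "pi * arcosh ((1 - b\<^sup>2 - \<bar>b\<bar> * r) / r) \<le> energy b r"
    and "energy b r \<le> pi * arsinh ((1 - b\<^sup>2 + \<bar>b\<bar> * r) / r)"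
    unfolding energy_eq_area(2)[OF b r] by (simp_all add: measure_box_strip measure_cbox_strip mult.commute)
qed

subsection \<open>Logarithmic asymptotics of \<open>arcosh\<close> and \<open>arsinh\<close>\<close>

lemma ln_one_minus_ge:
  fixes u :: real
  assumes "0 \<le> u" "u \<le> 1 / 2"
  shows "- 2 * u \<le> ln (1 - u)"
proof -
  have "- u - 2 * u\<^sup>2 \<le> ln (1 - u)"
    using assms by (intro ln_one_minus_pos_lower_bound) auto
  moreover have "u * u \<le> u * (1 / 2)"
    using assms by (intro mult_left_mono) auto
  ultimately show ?thesis
    by (simp add: power2_eq_square)
qed

lemma arcosh_ge_ln:
  fixes y :: real
  assumes "1 \<le> y"
  shows "ln (2 * y) - 1 / y\<^sup>2 \<le> arcosh y"
proof -
  have one_le: "1 \<le> y\<^sup>2"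
    using assms by (simp add: one_le_power)
  then have "(y - 1 / y)\<^sup>2 \<le> y\<^sup>2 - 1"
    using assms by (simp add: power2_eq_square field_simps)
  moreover have "0 \<le> y - 1 / y"
    using assms one_le by (simp add: field_simps power2_eq_square)
  ultimately have "y - 1 / y \<le> sqrt (y\<^sup>2 - 1)"
    by (simp add: real_le_rsqrt)
  moreover have "2 * y * (1 - 1 / (2 * y\<^sup>2)) = y + (y - 1 / y)"
    using assms by (simp add: field_simps power2_eq_square)
  ultimately have le: "2 * y * (1 - 1 / (2 * y\<^sup>2)) \<le> y + sqrt (y\<^sup>2 - 1)"
    by linarith
  have pos: "0 < 1 - 1 / (2 * y\<^sup>2)"
    using one_le by (simp add: divide_less_eq)
  have "ln (2 * y) - 1 / y\<^sup>2 \<le> ln (2 * y) + ln (1 - 1 / (2 * y\<^sup>2))"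
    using ln_one_minus_ge[of "1 / (2 * y\<^sup>2)"] one_le by (simp add: divide_le_eq)
  also have "\<dots> = ln (2 * y * (1 - 1 / (2 * y\<^sup>2)))"
    using assms pos by (simp add: ln_mult_pos)
  also have "\<dots> \<le> ln (y + sqrt (y\<^sup>2 - 1))"
    using assms pos le by (intro ln_mono) simp_all
  finally show ?thesis
    using assms by (simp add: arcosh_real_def)
qed

lemma arsinh_le_ln:
  fixes y :: real
  assumes "0 < y"
  shows "arsinh y \<le> ln (2 * y) + 1 / (4 * y\<^sup>2)"
proof -
  have "sqrt (y\<^sup>2 + 1) \<le> y + 1 / (2 * y)"
    using assms by (intro real_le_lsqrt) (simp_all add: power2_eq_square field_simps)
  moreover have "2 * y * (1 + 1 / (4 * y\<^sup>2)) = y + (y + 1 / (2 * y))"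
    using assms by (simp add: field_simps power2_eq_square)
  ultimately have le: "y + sqrt (y\<^sup>2 + 1) \<le> 2 * y * (1 + 1 / (4 * y\<^sup>2))"
    by linarith
  have pos: "0 < 1 + 1 / (4 * y\<^sup>2)"
    by (simp add: add_pos_nonneg)
  have "arsinh y \<le> ln (2 * y * (1 + 1 / (4 * y\<^sup>2)))"
    unfolding arsinh_real_def using le arsinh_real_aux[of y] by (rule ln_mono)
  also have "\<dots> = ln (2 * y) + ln (1 + 1 / (4 * y\<^sup>2))"
    using assms pos by (simp add: ln_mult_pos)
  also have "ln (1 + 1 / (4 * y\<^sup>2)) \<le> 1 / (4 * y\<^sup>2)"
    by (simp add: ln_add_one_self_le_self)
  finally show ?thesis
    by simp
qed

lemma arcosh_arsinh_sandwich:
  fixes E K t y\<^sub>1 y\<^sub>2 :: real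
  assumes y: "1 \<le> y\<^sub>1" "y\<^sub>1 \<le> y\<^sub>2" and t: "0 \<le> t" "t \<le> 1 / 2"
    and K: "2 * y\<^sub>1 = K * (1 - t)" "2 * y\<^sub>2 = K * (1 + t)"
    and E: "pi * arcosh y\<^sub>1 \<le> E" "E \<le> pi * arsinh y\<^sub>2"
  shows "\<bar>E - pi * ln K\<bar> \<le> 2 * pi * (t + 1 / y\<^sub>1\<^sup>2)"
proof -
  have "0 < K * (1 - t)"
    using y(1) K(1) by linarith
  then have "0 < K"
    using t by (auto simp: zero_less_mult_iff)
  then have "ln (2 * y\<^sub>1) = ln K + ln (1 - t)" "ln (2 * y\<^sub>2) = ln K + ln (1 + t)"
    using t by (simp_all add: K ln_mult_pos)
  then have "ln K - 2 * t - 1 / y\<^sub>1\<^sup>2 \<le> arcosh y\<^sub>1"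
    using arcosh_ge_ln[OF y(1)] ln_one_minus_ge[OF t] by linarith
  then have lower: "pi * (ln K - 2 * t - 1 / y\<^sub>1\<^sup>2) \<le> E"
    using E(1) by (meson mult_left_mono order_trans pi_ge_zero)
  have "y\<^sub>1\<^sup>2 \<le> y\<^sub>2\<^sup>2"
    using y by (simp add: power_mono)
  then have "y\<^sub>1\<^sup>2 \<le> 4 * y\<^sub>2\<^sup>2"
    using zero_le_power2[of y\<^sub>2] by linarith
  then have "1 / (4 * y\<^sub>2\<^sup>2) \<le> 1 / y\<^sub>1\<^sup>2"
    using y by (simp add: divide_le_eq)
  then have "arsinh y\<^sub>2 \<le> ln K + t + 1 / y\<^sub>1\<^sup>2"
    using arsinh_le_ln[of y\<^sub>2] ln_add_one_self_le_self[OF t(1)] \<open>ln (2 * y\<^sub>2) = _\<close> y by linarith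
  then have upper: "E \<le> pi * (ln K + t + 1 / y\<^sub>1\<^sup>2)"
    using E(2) by (meson mult_left_mono order_trans pi_ge_zero)
  have "\<bar>E - pi * ln K\<bar> \<le> pi * (2 * t + 1 / y\<^sub>1\<^sup>2)"
    using lower upper mult_nonneg_nonneg[OF pi_ge_zero t(1)] by (simp add: abs_le_iff algebra_simps)
  also have "\<dots> \<le> 2 * pi * (t + 1 / y\<^sub>1\<^sup>2)"
    using t zero_le_power2[of y\<^sub>1] by (simp add: algebra_simps divide_right_mono)
  finally show ?thesis .
qed

lemma energy_estimate:
  assumes b: "\<bar>b\<bar> < 1" and r: "0 < r" "r < 1 - \<bar>b\<bar>"
  shows "\<bar>energy b r - pi * ln ((2 - 2 * b\<^sup>2) / r)\<bar>
           \<le> 2 * pi * (\<bar>b\<bar> * r / (1 - b\<^sup>2) + r\<^sup>2 / (1 - b\<^sup>2 - \<bar>b\<bar> * r)\<^sup>2)"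
proof -
  define q where "q = 1 - b\<^sup>2"
  define t where "t = \<bar>b\<bar> * r / q"
  define y\<^sub>1 where "y\<^sub>1 = (q - \<bar>b\<bar> * r) / r"
  define y\<^sub>2 where "y\<^sub>2 = (q + \<bar>b\<bar> * r) / r"
  have q: "0 < q"
    using b by (simp add: q_def abs_square_less_1)
  have "r \<le> q - \<bar>b\<bar> * r" "2 * (\<bar>b\<bar> * r) \<le> q"
    using small_radius_bounds[OF b less_imp_le[OF r(1)] less_imp_le[OF r(2)]] by (simp_all add: q_def)
  then have y: "1 \<le> y\<^sub>1" and t: "0 \<le> t" "t \<le> 1 / 2"
    using r q by (simp_all add: y\<^sub>1_def t_def field_simps)
  have "y\<^sub>1 \<le> y\<^sub>2"
    using r by (simp add: y\<^sub>1_def y\<^sub>2_def divide_right_mono)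
  moreover have "2 * y\<^sub>1 = 2 * q / r * (1 - t)" "2 * y\<^sub>2 = 2 * q / r * (1 + t)"
    using r q by (simp_all add: y\<^sub>1_def y\<^sub>2_def t_def field_simps)
  moreover have "pi * arcosh y\<^sub>1 \<le> energy b r" "energy b r \<le> pi * arsinh y\<^sub>2"
    using energy_bounds[OF b r(1) less_imp_le[OF r(2)]] by (simp_all add: y\<^sub>1_def y\<^sub>2_def q_def)
  ultimately have "\<bar>energy b r - pi * ln (2 * q / r)\<bar> \<le> 2 * pi * (t + 1 / y\<^sub>1\<^sup>2)"
    using arcosh_arsinh_sandwich[OF y _ t] by blast
  then show ?thesis
    by (simp add: q_def t_def y\<^sub>1_def power_divide)
qed

lemma energy_asymptotics:
  assumes b: "\<bar>b\<bar> < 1"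
  shows "((\<lambda>r. energy b r - pi * ln (1 / r)) \<longlongrightarrow> pi * ln (2 - 2 * b\<^sup>2)) (at_right 0)"
proof -
  define err where "err r = energy b r - pi * ln ((2 - 2 * b\<^sup>2) / r)" for r
  define bound where
    "bound r = 2 * pi * (\<bar>b\<bar> * r / (1 - b\<^sup>2) + r\<^sup>2 / (1 - b\<^sup>2 - \<bar>b\<bar> * r)\<^sup>2)" for r
  have q: "0 < 1 - b\<^sup>2"
    using b by (simp add: abs_square_less_1)
  have "(bound \<longlongrightarrow> bound 0) (at_right 0)"
    unfolding bound_def using q by (intro tendsto_intros) auto
  then have "(bound \<longlongrightarrow> 0) (at_right 0)"
    by (simp add: bound_def)
  moreover have "\<forall>\<^sub>F r in at_right 0. norm (err r) \<le> bound r"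
    unfolding eventually_at_right_field
  proof (intro exI conjI allI impI)
    show "(0::real) < 1 - \<bar>b\<bar>"
      using b by simp
    fix r :: real assume "0 < r" "r < 1 - \<bar>b\<bar>"
    then show "norm (err r) \<le> bound r"
      using energy_estimate[OF b] by (simp add: err_def bound_def)
  qed
  ultimately have "(err \<longlongrightarrow> 0) (at_right 0)"
    by (rule Lim_null_comparison[rotated])
  then have "((\<lambda>r. err r + pi * ln (2 - 2 * b\<^sup>2)) \<longlongrightarrow> 0 + pi * ln (2 - 2 * b\<^sup>2)) (at_right 0)"
    by (intro tendsto_add tendsto_const)
  moreover have "\<forall>\<^sub>F r in at_right 0. err r + pi * ln (2 - 2 * b\<^sup>2) = energy b r - pi * ln (1 / r)"
    unfolding eventually_at_right_field
  proof (intro exI conjI allI impI)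
    fix r :: real assume "0 < r"
    then show "err r + pi * ln (2 - 2 * b\<^sup>2) = energy b r - pi * ln (1 / r)"
      using q by (simp add: err_def ln_div algebra_simps)
  qed (rule zero_less_one)
  ultimately show ?thesis
    by (simp add: Lim_transform_eventually)
qed

theorem lemma2p7:
  shows "(\<exists>C>0. \<forall>b r. -1 < b \<and> b < 1 \<and> 0 < r \<and> r < 1 - \<bar>b\<bar> \<longrightarrow>
            set_integrable lborel (upper_half - ball (complex_of_real b) r) (grad_sq (u_b b)) \<and>
            \<bar>energy b r - pi * ln ((2 - 2 * b\<^sup>2) / r)\<bar>
              \<le> C * (\<bar>b\<bar> * r / (1 - b\<^sup>2) + r\<^sup>2 / (1 - b\<^sup>2 - \<bar>b\<bar> * r)\<^sup>2))
       \<and> (\<forall>b. -1 < b \<and> b < 1 \<longrightarrow>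
            ((\<lambda>r. energy b r - pi * ln (1 / r)) \<longlongrightarrow> pi * ln (2 - 2 * b\<^sup>2)) (at_right 0))"
proof (intro conjI allI impI)
  show "\<exists>C>0. \<forall>b r. -1 < b \<and> b < 1 \<and> 0 < r \<and> r < 1 - \<bar>b\<bar> \<longrightarrow>
            set_integrable lborel (upper_half - ball (complex_of_real b) r) (grad_sq (u_b b)) \<and>
            \<bar>energy b r - pi * ln ((2 - 2 * b\<^sup>2) / r)\<bar>
              \<le> C * (\<bar>b\<bar> * r / (1 - b\<^sup>2) + r\<^sup>2 / (1 - b\<^sup>2 - \<bar>b\<bar> * r)\<^sup>2)"
  proof (intro exI[of _ "2 * pi"] conjI allI impI)
    fix b r :: real
    assume "-1 < b \<and> b < 1 \<and> 0 < r \<and> r < 1 - \<bar>b\<bar>"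
    then have b: "\<bar>b\<bar> < 1" and r: "0 < r" "r < 1 - \<bar>b\<bar>"
      by auto
    show "set_integrable lborel (upper_half - ball (complex_of_real b) r) (grad_sq (u_b b))"
      using energy_eq_area(1)[OF b r(1) less_imp_le[OF r(2)]] .
    show "\<bar>energy b r - pi * ln ((2 - 2 * b\<^sup>2) / r)\<bar>
        \<le> 2 * pi * (\<bar>b\<bar> * r / (1 - b\<^sup>2) + r\<^sup>2 / (1 - b\<^sup>2 - \<bar>b\<bar> * r)\<^sup>2)"
      using energy_estimate[OF b r] .
  qed simp
next
  fix b :: real
  assume "-1 < b \<and> b < 1"
  then show "((\<lambda>r. energy b r - pi * ln (1 / r)) \<longlongrightarrow> pi * ln (2 - 2 * b\<^sup>2)) (at_right 0)"
    by (intro energy_asymptotics) auto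
qed

end
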